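(* Let $G:\mathbb{R}^k\to\mathbb{R}^n$ and $G^\dagger:\mathbb{R}^n\to\mathbb{R}^k$ be maps such that $G\circ G^\dagger$ is a $\delta$-approximate projector for some $\delta\ge 0$, and let $A\in\mathbb{R}^{m\times n}$ satisfy $REC(R(G),\alpha,\beta)$ with $0<\alpha<\beta$. Fix $x^*\in R(G)$, $y=Ax^*$, $f(x)=\|Ax-y\|_2^2$. For any $x_t\in R(G)$, define $w_t=x_t-\frac{1}{\beta}A^T(Ax_t-y)$ and $x_{t+1}=G(G^\dagger(w_t))$. Then $$f(x_{t+1})\le\Big(\frac{\beta}{\alpha}-1\Big)f(x_t)+\beta\delta.$$
   Context: $R(G)=\{G(z):z\in\mathbb{R}^k\}$ denotes the range of $G$. Restricted Eigenvalue Constraint: for $S\subset\mathbb{R}^n$ and $0<\alpha<\beta$, a matrix $A\in\mathbb{R}^{m\times n}$ satisfies $REC(S,\alpha,\beta)$ if $\alpha\|x_1-x_2\|^2\le\|A(x_1-x_2)\|^2\le\beta\|x_1-x_2\|^2$ for all $x_1,x_2\in S$. $\delta$-approximate projector: the composite map $G\circ G^\dagger:\mathbb{R}^n\to R(G)$ is a $\delta$-approximate projector if for all $x\in\mathbb{R}^n$, $\|x-G(G^\dagger(x))\|^2\le \inf_{z\in\mathbb{R}^k}\|x-G(z)\|^2+\delta$. All norms are Euclidean. *)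

theory Defs
  imports "HOL-Analysis.Analysis"
begin

definition REC :: "(real^'n) set \<Rightarrow> real^'n^'m \<Rightarrow> real \<Rightarrow> real \<Rightarrow> bool" where
  "REC S A \<alpha> \<beta> \<longleftrightarrow> 0 < \<alpha> \<and> \<alpha> < \<beta> \<and>
     (\<forall>x1\<in>S. \<forall>x2\<in>S. \<alpha> * (norm (x1 - x2))\<^sup>2 \<le> (norm (A *v (x1 - x2)))\<^sup>2 \<and>
                      (norm (A *v (x1 - x2)))\<^sup>2 \<le> \<beta> * (norm (x1 - x2))\<^sup>2)"

definition approx_projector ::
  "(real^'k \<Rightarrow> real^'n) \<Rightarrow> (real^'n \<Rightarrow> real^'k) \<Rightarrow> real \<Rightarrow> bool" where
  "approx_projector G Gd \<delta> \<longleftrightarrow>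
     (\<forall>x. (norm (x - G (Gd x)))\<^sup>2 \<le> (INF z. (norm (x - G z))\<^sup>2) + \<delta>)"

end

theory Submission
  imports Defs
begin

text \<open>
  Write \<open>f x = \<parallel>A x - y\<parallel>\<^sup>2\<close>, \<open>g = A\<^sup>T (A x\<^sub>t - y)\<close> and \<open>w = x\<^sub>t - g / \<beta>\<close>.
  Completing the square, \<open>f x - f x\<^sub>t = 2 \<langle>g, x - x\<^sub>t\<rangle> + \<parallel>A (x - x\<^sub>t)\<parallel>\<^sup>2\<close> and
  \<open>\<beta> \<parallel>w - x\<parallel>\<^sup>2 - \<parallel>g\<parallel>\<^sup>2 / \<beta> = 2 \<langle>g, x - x\<^sub>t\<rangle> + \<beta> \<parallel>x - x\<^sub>t\<parallel>\<^sup>2\<close>, so the upper REC bound gives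
  \<open>f x\<^sub>t\<^sub>+\<^sub>1 \<le> f x\<^sub>t + \<beta> \<parallel>w - x\<^sub>t\<^sub>+\<^sub>1\<parallel>\<^sup>2 - \<parallel>g\<parallel>\<^sup>2 / \<beta>\<close>. The projector replaces \<open>x\<^sub>t\<^sub>+\<^sub>1\<close> by \<open>x\<^sup>*\<close>
  at the cost \<open>\<beta> \<delta>\<close>; at \<open>x\<^sup>*\<close> the right-hand side equals \<open>\<beta> \<parallel>x\<^sup>* - x\<^sub>t\<parallel>\<^sup>2 - f x\<^sub>t\<close>
  because \<open>f x\<^sup>* = 0\<close>, and the lower REC bound gives \<open>\<alpha> \<parallel>x\<^sup>* - x\<^sub>t\<parallel>\<^sup>2 \<le> f x\<^sub>t\<close>.
\<close>

lemma REC_lower: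
  "REC S A \<alpha> \<beta> \<Longrightarrow> x1 \<in> S \<Longrightarrow> x2 \<in> S \<Longrightarrow> \<alpha> * (norm (x1 - x2))\<^sup>2 \<le> (norm (A *v (x1 - x2)))\<^sup>2"
  unfolding REC_def by blast

lemma REC_upper:
  "REC S A \<alpha> \<beta> \<Longrightarrow> x1 \<in> S \<Longrightarrow> x2 \<in> S \<Longrightarrow> (norm (A *v (x1 - x2)))\<^sup>2 \<le> \<beta> * (norm (x1 - x2))\<^sup>2"
  unfolding REC_def by blast

lemma approx_projector_le:
  assumes "approx_projector G Gd \<delta>"
  shows "(norm (x - G (Gd x)))\<^sup>2 \<le> (norm (x - G z))\<^sup>2 + \<delta>"
proof -
  have "(INF z. (norm (x - G z))\<^sup>2) \<le> (norm (x - G z))\<^sup>2"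
    by (rule cINF_lower) (auto intro: bdd_belowI[where m = 0])
  moreover have "(norm (x - G (Gd x)))\<^sup>2 \<le> (INF z. (norm (x - G z))\<^sup>2) + \<delta>"
    using assms unfolding approx_projector_def by blast
  ultimately show ?thesis by linarith
qed

lemma inner_transpose_mult:
  fixes A :: "real^'n^'m"
  shows "(transpose A *v u) \<bullet> v = u \<bullet> (A *v v)"
  by (simp add: dot_lmul_matrix)

lemma norm_add_sq: "(norm (a + b))\<^sup>2 = (norm a)\<^sup>2 + 2 * (a \<bullet> b) + (norm (b :: 'a::real_inner))\<^sup>2"
  by (simp add: power2_norm_eq_inner inner_add_left inner_add_right inner_commute)

lemma norm_residual_sq_expansion:
  fixes A :: "real^'n^'m"
  shows "(norm (A *v x - y))\<^sup>2 = (norm (A *v x0 - y))\<^sup>2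
           + 2 * ((transpose A *v (A *v x0 - y)) \<bullet> (x - x0)) + (norm (A *v (x - x0)))\<^sup>2"
proof -
  have "A *v x - y = (A *v x0 - y) + A *v (x - x0)"
    by (simp add: matrix_vector_mult_diff_distrib)
  then show ?thesis
    by (simp only: norm_add_sq inner_transpose_mult)
qed

lemma norm_gradient_step_sq:
  fixes g :: "'a::real_inner"
  assumes "\<beta> \<noteq> 0"
  shows "\<beta> * (norm (x0 - (1 / \<beta>) *\<^sub>R g - x))\<^sup>2 - (norm g)\<^sup>2 / \<beta>
           = 2 * (g \<bullet> (x - x0)) + \<beta> * (norm (x - x0))\<^sup>2"
proof -
  have "x0 - (1 / \<beta>) *\<^sub>R g - x = - ((x - x0) + (1 / \<beta>) *\<^sub>R g)" by simp
  then have "(norm (x0 - (1 / \<beta>) *\<^sub>R g - x))\<^sup>2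
      = (norm (x - x0))\<^sup>2 + (2 / \<beta>) * (g \<bullet> (x - x0)) + (norm g)\<^sup>2 / \<beta>\<^sup>2"
    by (simp only: norm_minus_cancel norm_add_sq)
      (simp add: inner_commute power_divide)
  with assms show ?thesis
    by (simp add: field_simps power2_eq_square)
qed

lemma norm_residual_sq_le_gradient_step:
  fixes A :: "real^'n^'m" and x0 y
  defines "g \<equiv> transpose A *v (A *v x0 - y)"
  assumes "\<beta> > 0" and "(norm (A *v (x - x0)))\<^sup>2 \<le> \<beta> * (norm (x - x0))\<^sup>2"
  shows "(norm (A *v x - y))\<^sup>2
           \<le> (norm (A *v x0 - y))\<^sup>2 + \<beta> * (norm (x0 - (1 / \<beta>) *\<^sub>R g - x))\<^sup>2 - (norm g)\<^sup>2 / \<beta>"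
  using norm_residual_sq_expansion[of A x y x0] norm_gradient_step_sq[of \<beta> x0 g x] assms
  by simp

theorem mainTheorem2:
  fixes G :: "real^'k \<Rightarrow> real^'n" and Gd :: "real^'n \<Rightarrow> real^'k"
    and A :: "real^'n^'m" and \<alpha> \<beta> \<delta> :: real
    and xstar xt :: "real^'n"
  assumes "\<delta> \<ge> 0"
    and "approx_projector G Gd \<delta>"
    and "0 < \<alpha>" and "\<alpha> < \<beta>"
    and "REC (range G) A \<alpha> \<beta>"
    and "xstar \<in> range G"
    and "xt \<in> range G"
  shows "let y = A *v xstar;
             f = (\<lambda>x. (norm (A *v x - y))\<^sup>2);
             wt = xt - (1 / \<beta>) *\<^sub>R (transpose A *v (A *v xt - y));
             xt1 = G (Gd wt)
         in f xt1 \<le> (\<beta> / \<alpha> - 1) * f xt + \<beta> * \<delta>"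
proof -
  define f where "f x = (norm (A *v x - A *v xstar))\<^sup>2" for x
  define g where "g = transpose A *v (A *v xt - A *v xstar)"
  define w where "w = xt - (1 / \<beta>) *\<^sub>R g"
  have "\<beta> > 0" "\<beta> \<noteq> 0" using assms by linarith+
  obtain z where z: "xstar = G z" using assms(6) by blast
  have "f (G (Gd w)) \<le> f xt + \<beta> * (norm (w - G (Gd w)))\<^sup>2 - (norm g)\<^sup>2 / \<beta>"
    using norm_residual_sq_le_gradient_step[OF \<open>\<beta> > 0\<close> REC_upper[OF assms(5)]] assms(7)
    unfolding f_def g_def w_def by simp
  moreover have "\<beta> * (norm (w - G (Gd w)))\<^sup>2 \<le> \<beta> * (norm (w - xstar))\<^sup>2 + \<beta> * \<delta>"
    using approx_projector_le[OF assms(2), of w z] \<open>\<beta> > 0\<close> z by (simp flip: distrib_left)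
  moreover have "\<beta> * (norm (w - xstar))\<^sup>2 - (norm g)\<^sup>2 / \<beta> = \<beta> * (norm (xstar - xt))\<^sup>2 - 2 * f xt"
  proof -
    have "f xstar = f xt + 2 * (g \<bullet> (xstar - xt)) + f xt"
      using norm_residual_sq_expansion[of A xstar "A *v xstar" xt]
      unfolding f_def g_def by (simp add: matrix_vector_mult_diff_distrib norm_minus_commute)
    then have "g \<bullet> (xstar - xt) = - f xt" by (simp add: f_def)
    then show ?thesis
      using norm_gradient_step_sq[OF \<open>\<beta> \<noteq> 0\<close>, of xt g xstar] unfolding w_def by simp
  qed
  moreover have "\<beta> * (norm (xstar - xt))\<^sup>2 \<le> (\<beta> / \<alpha>) * f xt"
    using REC_lower[OF assms(5,7,6)] assms(3) \<open>\<beta> > 0\<close>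
    by (simp add: f_def field_simps norm_minus_commute matrix_vector_mult_diff_distrib)
  ultimately show ?thesis
    unfolding Let_def f_def[symmetric] g_def[symmetric] w_def[symmetric]
    by (simp add: left_diff_distrib)
qed

end
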